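(* Let $f:\mathbb{R}^d\times\mathcal{X}\to\mathbb{R}$ be differentiable in $\theta$, where $\mathcal{X}$ is a subset of a Euclidean space with $\sup_{x\in\mathcal{X}}\Vert x\Vert\le D<\infty$. Assume (A1): there are $K_1,K_2>0$ with $\Vert\nabla f(\theta,x)-\nabla f(\hat\theta,\hat x)\Vert\le K_1\Vert\theta-\hat\theta\Vert+K_2\Vert x-\hat x\Vert(\Vert\theta\Vert+\Vert\hat\theta\Vert+1)$ for all $\theta,\hat\theta\in\mathbb{R}^d$, $x,\hat x\in\mathcal{X}$; and (A2): there is $\mu>0$ with $\langle\nabla f(\theta_1,x)-\nabla f(\theta_2,x),\theta_1-\theta_2\rangle\ge\mu\Vert\theta_1-\theta_2\Vert^2$ for all $\theta_1,\theta_2,x$. Let $\hat x_1,\dots,\hat x_n\in\mathcal{X}$, $b\in\{1,\dots,n\}$, let $\hat\theta_*$ be the minimizer of $\hat F(\theta,\hat X_n):=\frac1n\sum_{i=1}^nf(\theta,\hat x_i)$, and let $\hat V(\theta):=1+\Vert\theta-\hat\theta_*\Vert^2$. Let $\hat P$ be the transition kernel of $\hat\theta_k=\hat\theta_{k-1}-\frac{\eta}{b}\sum_{i\in\Omega_k}\nabla f(\hat\theta_{k-1},\hat x_i)$, with $(\Omega_k)$ i.i.d. uniformly random $b$-subsets of $\{1,\dots,n\}$. If $\eta<\min\left\{\frac1\mu,\frac{\mu}{K_1^2+64D^2K_2^2}\right\}$, then for all $\theta\in\mathbb{R}^d$, $$(\hat P\hat V)(\theta)\le(1-\eta\mu)\hat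 V(\theta)+2\eta\mu-\eta^2K_1^2-56\eta^2D^2K_2^2+64\eta^2D^2K_2^2\Vert\hat\theta_*\Vert^2.$$
   Context: $(\hat P\hat V)(\theta)=\mathbb{E}[\hat V(\hat\theta_1)\mid\hat\theta_0=\theta]$. *)

theory Defs
  imports "HOL-Probability.Probability"
begin

definition Fhat :: "('a \<Rightarrow> 'b \<Rightarrow> real) \<Rightarrow> (nat \<Rightarrow> 'b) \<Rightarrow> nat \<Rightarrow> 'a \<Rightarrow> real" where
  "Fhat f xh n \<theta> = (1 / real n) * (\<Sum>i=1..n. f \<theta> (xh i))"

definition Vhat :: "'a::real_normed_vector \<Rightarrow> 'a \<Rightarrow> real" where
  "Vhat \<theta>s \<theta> = 1 + (norm (\<theta> - \<theta>s))\<^sup>2"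

definition minibatch :: "nat \<Rightarrow> nat \<Rightarrow> nat set pmf" where
  "minibatch n b = pmf_of_set {\<Omega>. \<Omega> \<subseteq> {1..n} \<and> card \<Omega> = b}"

definition sgd_step :: "('a::real_vector \<Rightarrow> 'b \<Rightarrow> 'a) \<Rightarrow> (nat \<Rightarrow> 'b) \<Rightarrow> nat \<Rightarrow> real \<Rightarrow> nat set \<Rightarrow> 'a \<Rightarrow> 'a" where
  "sgd_step grad xh b \<eta> \<Omega> \<theta> = \<theta> - (\<eta> / real b) *\<^sub>R (\<Sum>i\<in>\<Omega>. grad \<theta> (xh i))"

definition Phat :: "('a::real_vector \<Rightarrow> 'b \<Rightarrow> 'a) \<Rightarrow> (nat \<Rightarrow> 'b) \<Rightarrow> nat \<Rightarrow> nat \<Rightarrow> real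
                    \<Rightarrow> ('a \<Rightarrow> real) \<Rightarrow> 'a \<Rightarrow> real" where
  "Phat grad xh n b \<eta> V \<theta> =
     measure_pmf.expectation (minibatch n b) (\<lambda>\<Omega>. V (sgd_step grad xh b \<eta> \<Omega> \<theta>))"

end

theory Submission
  imports Defs
begin

text \<open>
  From \<theta>, one step lands at \<theta>s + u - \<eta> e(\<Omega>), where u = \<theta> - \<theta>s - \<eta> m is the full-gradient
  step (m the mean gradient at \<theta>) and e(\<Omega>) is the deviation of the minibatch mean from m.
  Every index lies in equally many b-subsets, so e has mean zero and the cross term drops out:
  (P V)(\<theta>) \<le> 1 + |u|^2 + \<eta>^2 sup |e|^2. Since the gradients sum to zero at the minimizer, strong
  monotonicity and the K1-Lipschitz bound contract the full step,
  |u|^2 \<le> (1 - 2\<eta>\<mu> + \<eta>^2 K1^2) |\<theta> - \<theta>s|^2, while the K2-term of (A1) bounds the spread of the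
  individual gradients, |e| \<le> 2 D K2 (2|\<theta>| + 1). The condition \<eta> (K1^2 + 64 D^2 K2^2) \<le> \<mu> then
  absorbs all quadratic terms.
\<close>

lemma card_subsets_of_card_containing:
  assumes "finite A" and "i \<in> A" and "1 \<le> k"
  shows "card {\<Omega>. \<Omega> \<subseteq> A \<and> card \<Omega> = k \<and> i \<in> \<Omega>} = (card A - 1) choose (k - 1)"
proof -
  have "bij_betw (\<lambda>\<Omega>. \<Omega> - {i}) {\<Omega>. \<Omega> \<subseteq> A \<and> card \<Omega> = k \<and> i \<in> \<Omega>}
          {T. T \<subseteq> A - {i} \<and> card T = k - 1}"
  proof (rule bij_betw_byWitness[where f' = "insert i"])
    show "(\<lambda>\<Omega>. \<Omega> - {i}) ` {\<Omega>. \<Omega> \<subseteq> A \<and> card \<Omega> = k \<and> i \<in> \<Omega>} \<subseteq> {T. T \<subseteq> A - {i} \<and> card T = k - 1}"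
      using assms(1) by (auto dest: finite_subset)
    show "insert i ` {T. T \<subseteq> A - {i} \<and> card T = k - 1} \<subseteq> {\<Omega>. \<Omega> \<subseteq> A \<and> card \<Omega> = k \<and> i \<in> \<Omega>}"
    proof clarify
      fix T assume "T \<subseteq> A - {i}" "card T = k - 1"
      moreover have "finite T" and "i \<notin> T"
        using \<open>T \<subseteq> A - {i}\<close> assms(1) finite_subset by auto
      ultimately show "insert i T \<subseteq> A \<and> card (insert i T) = k \<and> i \<in> insert i T"
        using assms(2,3) by auto
    qed
  qed auto
  then have "card {\<Omega>. \<Omega> \<subseteq> A \<and> card \<Omega> = k \<and> i \<in> \<Omega>} = card (A - {i}) choose (k - 1)"
    using assms(1) by (simp add: bij_betw_same_card n_subsets)
  then show ?thesis
    using assms(1,2) by simp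
qed

lemma sum_subsets_of_card_sum:
  fixes \<psi> :: "'a \<Rightarrow> 'b::comm_semiring_1"
  assumes "finite A" and "1 \<le> k"
  shows "(\<Sum>\<Omega> | \<Omega> \<subseteq> A \<and> card \<Omega> = k. \<Sum>i\<in>\<Omega>. \<psi> i) = of_nat ((card A - 1) choose (k - 1)) * (\<Sum>i\<in>A. \<psi> i)"
proof -
  let ?S = "{\<Omega>. \<Omega> \<subseteq> A \<and> card \<Omega> = k}"
  have "(\<Sum>\<Omega>\<in>?S. \<Sum>i\<in>\<Omega>. \<psi> i) = (\<Sum>\<Omega>\<in>?S. \<Sum>i\<in>A. if i \<in> \<Omega> then \<psi> i else 0)"
  proof (rule sum.cong[OF refl])
    fix \<Omega> assume "\<Omega> \<in> ?S"
    then have "A \<inter> \<Omega> = \<Omega>"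
      by auto
    then show "(\<Sum>i\<in>\<Omega>. \<psi> i) = (\<Sum>i\<in>A. if i \<in> \<Omega> then \<psi> i else 0)"
      using sum.inter_restrict[OF assms(1), of \<psi> \<Omega>] by simp
  qed
  also have "\<dots> = (\<Sum>i\<in>A. \<Sum>\<Omega>\<in>?S. if i \<in> \<Omega> then \<psi> i else 0)"
    by (rule sum.swap)
  also have "\<dots> = (\<Sum>i\<in>A. of_nat ((card A - 1) choose (k - 1)) * \<psi> i)"
  proof (intro sum.cong refl)
    fix i assume "i \<in> A"
    have "(\<Sum>\<Omega>\<in>?S. if i \<in> \<Omega> then \<psi> i else 0) = of_nat (card {\<Omega>\<in>?S. i \<in> \<Omega>}) * \<psi> i"
      using assms(1) by (simp add: sum.If_cases Int_def)
    also have "{\<Omega>\<in>?S. i \<in> \<Omega>} = {\<Omega>. \<Omega> \<subseteq> A \<and> card \<Omega> = k \<and> i \<in> \<Omega>}"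
      by auto
    finally show "(\<Sum>\<Omega>\<in>?S. if i \<in> \<Omega> then \<psi> i else 0) = of_nat ((card A - 1) choose (k - 1)) * \<psi> i"
      using card_subsets_of_card_containing[OF assms(1) \<open>i \<in> A\<close> assms(2)] by simp
  qed
  finally show ?thesis
    by (simp add: sum_distrib_left)
qed

lemma set_pmf_minibatch:
  assumes "b \<le> n"
  shows "set_pmf (minibatch n b) = {\<Omega>. \<Omega> \<subseteq> {1..n} \<and> card \<Omega> = b}"
proof -
  have "{1..b} \<in> {\<Omega>. \<Omega> \<subseteq> {1..n} \<and> card \<Omega> = b}"
    using assms by simp
  then have "{\<Omega>. \<Omega> \<subseteq> {1..n} \<and> card \<Omega> = b} \<noteq> {}"
    by blast
  then show ?thesis
    by (simp add: minibatch_def)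
qed

lemma finite_set_pmf_minibatch: "b \<le> n \<Longrightarrow> finite (set_pmf (minibatch n b))"
  by (simp add: set_pmf_minibatch)

lemma expectation_minibatch_sum:
  assumes "b \<in> {1..n}"
  shows "measure_pmf.expectation (minibatch n b) (\<lambda>\<Omega>. \<Sum>i\<in>\<Omega>. \<psi> i) = real b / real n * (\<Sum>i=1..n. \<psi> i)"
proof -
  let ?S = "{\<Omega>. \<Omega> \<subseteq> {1..n} \<and> card \<Omega> = b}"
  have "?S \<noteq> {}"
    using set_pmf_not_empty[of "minibatch n b"] set_pmf_minibatch[of b n] assms by simp
  then have "measure_pmf.expectation (minibatch n b) (\<lambda>\<Omega>. \<Sum>i\<in>\<Omega>. \<psi> i)
               = (\<Sum>\<Omega>\<in>?S. \<Sum>i\<in>\<Omega>. \<psi> i) / real (card ?S)"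
    unfolding minibatch_def by (intro integral_pmf_of_set) auto
  also have "(\<Sum>\<Omega>\<in>?S. \<Sum>i\<in>\<Omega>. \<psi> i) = real ((n - 1) choose (b - 1)) * (\<Sum>i=1..n. \<psi> i)"
    using sum_subsets_of_card_sum[of "{1..n}" b \<psi>] assms by simp
  also have "card ?S = n choose b"
    using n_subsets[of "{1..n}" b] by simp
  also have "b * (n choose b) = n * ((n - 1) choose (b - 1))"
    using assms by (intro times_binomial_minus1_eq) simp
  then have "real ((n - 1) choose (b - 1)) = real b / real n * real (n choose b)"
    using assms by (simp add: field_simps flip: of_nat_mult)
  moreover have "0 < n choose b"
    using assms by simp
  ultimately show ?thesis
    by simp
qed

lemma norm_mean_le:
  fixes v :: "'i \<Rightarrow> 'a::real_normed_vector"
  assumes "finite I" and "I \<noteq> {}" and "\<And>i. i \<in> I \<Longrightarrow> norm (v i) \<le> M"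
  shows "norm ((1 / real (card I)) *\<^sub>R (\<Sum>i\<in>I. v i)) \<le> M"
proof -
  have "norm (\<Sum>i\<in>I. v i) \<le> real (card I) * M"
    using norm_sum[of v I] sum_mono[of I "\<lambda>i. norm (v i)" "\<lambda>_. M"] assms(3) by simp
  then show ?thesis
    using assms(1,2) by (simp add: field_simps card_gt_0_iff)
qed

lemma norm_diff_mean_le:
  fixes v :: "'i \<Rightarrow> 'a::real_normed_vector"
  assumes "finite I" and "I \<noteq> {}" and "\<And>j. j \<in> I \<Longrightarrow> norm (x - v j) \<le> M"
  shows "norm (x - (1 / real (card I)) *\<^sub>R (\<Sum>j\<in>I. v j)) \<le> M"
proof -
  have "x - (1 / real (card I)) *\<^sub>R (\<Sum>j\<in>I. v j) = (1 / real (card I)) *\<^sub>R (\<Sum>j\<in>I. x - v j)"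
    using assms(1,2) by (simp add: sum_subtractf scaleR_diff_right sum_constant_scaleR card_gt_0_iff)
  then show ?thesis
    using norm_mean_le[OF assms] by simp
qed

lemma power2_norm_diff_scaleR:
  fixes a b :: "'a::real_inner"
  shows "(norm (a - t *\<^sub>R b))\<^sup>2 = (norm a)\<^sup>2 - 2 * t * (a \<bullet> b) + t\<^sup>2 * (norm b)\<^sup>2"
  unfolding power2_norm_eq_inner
  by (simp add: inner_commute algebra_simps power2_eq_square)

lemma expectation_norm_diff_sq_le:
  fixes u :: "'a::real_inner" and e :: "'c \<Rightarrow> 'a" and p :: "'c pmf"
  assumes "finite (set_pmf p)"
    and "measure_pmf.expectation p (\<lambda>\<omega>. u \<bullet> e \<omega>) = 0"
    and "\<And>\<omega>. \<omega> \<in> set_pmf p \<Longrightarrow> norm (e \<omega>) \<le> M"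
  shows "measure_pmf.expectation p (\<lambda>\<omega>. (norm (u - t *\<^sub>R e \<omega>))\<^sup>2) \<le> (norm u)\<^sup>2 + t\<^sup>2 * M\<^sup>2"
proof -
  have int: "integrable p g" for g :: "'c \<Rightarrow> real"
    using assms(1) by (rule integrable_measure_pmf_finite)
  have "measure_pmf.expectation p (\<lambda>\<omega>. (norm (e \<omega>))\<^sup>2) \<le> M\<^sup>2"
    using assms(3) by (intro measure_pmf.integral_le_const int)
      (auto simp: AE_measure_pmf_iff intro!: power_mono)
  then show ?thesis
    using assms(2) by (simp add: power2_norm_diff_scaleR int mult_left_mono)
qed

lemma power2_norm_diff_scaleR_le:
  fixes d v :: "'a::real_inner"
  assumes "\<mu> * (norm d)\<^sup>2 \<le> d \<bullet> v" and "norm v \<le> K * norm d" and "0 \<le> t"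
  shows "(norm (d - t *\<^sub>R v))\<^sup>2 \<le> (1 - 2 * t * \<mu> + t\<^sup>2 * K\<^sup>2) * (norm d)\<^sup>2"
proof -
  have "(norm (d - t *\<^sub>R v))\<^sup>2 = (norm d)\<^sup>2 - 2 * t * (d \<bullet> v) + t\<^sup>2 * (norm v)\<^sup>2"
    by (rule power2_norm_diff_scaleR)
  moreover have "t\<^sup>2 * (norm v)\<^sup>2 \<le> t\<^sup>2 * (K * norm d)\<^sup>2"
    using assms(2) by (intro mult_left_mono power_mono) auto
  moreover have "2 * t * (\<mu> * (norm d)\<^sup>2) \<le> 2 * t * (d \<bullet> v)"
    using assms(1,3) by (intro mult_left_mono) auto
  ultimately show ?thesis
    by (simp add: algebra_simps)
qed

lemma sum_gradients_eq_0_at_minimum: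
  fixes g :: "'i \<Rightarrow> 'a::real_inner"
  assumes "\<And>i. i \<in> I \<Longrightarrow> (f i has_derivative (\<lambda>h. g i \<bullet> h)) (at x)"
    and "\<And>y. (\<Sum>i\<in>I. f i x) \<le> (\<Sum>i\<in>I. f i y)"
  shows "(\<Sum>i\<in>I. g i) = 0"
proof -
  have "((\<lambda>y. \<Sum>i\<in>I. f i y) has_derivative (\<lambda>h. (\<Sum>i\<in>I. g i) \<bullet> h)) (at x)"
    using has_derivative_sum[of I f "\<lambda>i h. g i \<bullet> h"] assms(1) by (simp add: inner_sum_left)
  then have "(\<lambda>h. (\<Sum>i\<in>I. g i) \<bullet> h) = (\<lambda>h. 0)"
    by (rule has_derivative_local_min) (simp add: assms(2) always_eventually)
  then show ?thesis
    by (metis inner_eq_zero_iff)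
qed

lemma power2_norm_averaged_gradient_step_le:
  fixes g :: "'i \<Rightarrow> 'a::real_inner \<Rightarrow> 'a"
  assumes "finite I" and "I \<noteq> {}" and "(\<Sum>i\<in>I. g i \<theta>s) = 0"
    and "\<And>i. i \<in> I \<Longrightarrow> \<mu> * (norm (\<theta> - \<theta>s))\<^sup>2 \<le> (g i \<theta> - g i \<theta>s) \<bullet> (\<theta> - \<theta>s)"
    and "\<And>i. i \<in> I \<Longrightarrow> norm (g i \<theta> - g i \<theta>s) \<le> K * norm (\<theta> - \<theta>s)"
    and "0 \<le> t"
  shows "(norm (\<theta> - \<theta>s - t *\<^sub>R ((1 / real (card I)) *\<^sub>R (\<Sum>i\<in>I. g i \<theta>))))\<^sup>2
           \<le> (1 - 2 * t * \<mu> + t\<^sup>2 * K\<^sup>2) * (norm (\<theta> - \<theta>s))\<^sup>2"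
proof (rule power2_norm_diff_scaleR_le)
  have c: "0 < real (card I)"
    using assms(1,2) by (simp add: card_gt_0_iff)
  have mean: "(1 / real (card I)) *\<^sub>R (\<Sum>i\<in>I. g i \<theta>) = (1 / real (card I)) *\<^sub>R (\<Sum>i\<in>I. g i \<theta> - g i \<theta>s)"
    using assms(3) by (simp add: sum_subtractf)
  have "(1 / real (card I)) * (\<Sum>i\<in>I. \<mu> * (norm (\<theta> - \<theta>s))\<^sup>2)
          \<le> (1 / real (card I)) * (\<Sum>i\<in>I. (\<theta> - \<theta>s) \<bullet> (g i \<theta> - g i \<theta>s))"
    using assms(4) c by (intro mult_left_mono sum_mono) (auto simp: inner_commute)
  then show "\<mu> * (norm (\<theta> - \<theta>s))\<^sup>2 \<le> (\<theta> - \<theta>s) \<bullet> (1 / real (card I)) *\<^sub>R (\<Sum>i\<in>I. g i \<theta>)"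
    using c by (simp add: mean inner_sum_right)
  show "norm ((1 / real (card I)) *\<^sub>R (\<Sum>i\<in>I. g i \<theta>)) \<le> K * norm (\<theta> - \<theta>s)"
    unfolding mean using assms(1,2,5) by (rule norm_mean_le)
qed (fact assms(6))

lemma Fhat_minimizer_gradient_sum_eq_0:
  assumes "\<And>\<theta> x. x \<in> X \<Longrightarrow> ((\<lambda>t. f t x) has_derivative (\<lambda>h. grad \<theta> x \<bullet> h)) (at \<theta>)"
    and "\<And>i. i \<in> {1..n} \<Longrightarrow> xh i \<in> X"
    and "\<And>\<theta>. Fhat f xh n \<theta>s \<le> Fhat f xh n \<theta>"
    and "1 \<le> n"
  shows "(\<Sum>i=1..n. grad \<theta>s (xh i)) = 0"
proof (rule sum_gradients_eq_0_at_minimum)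
  show "((\<lambda>t. f t (xh i)) has_derivative (\<lambda>h. grad \<theta>s (xh i) \<bullet> h)) (at \<theta>s)" if "i \<in> {1..n}" for i
    using assms(1,2) that by blast
  show "(\<Sum>i=1..n. f \<theta>s (xh i)) \<le> (\<Sum>i=1..n. f y (xh i))" for y
    using assms(3)[of y] assms(4) by (simp add: Fhat_def divide_le_cancel)
qed

lemma norm_grad_diff_bounded_data_le:
  assumes "\<And>\<theta> \<theta>' x x'. x \<in> X \<Longrightarrow> x' \<in> X \<Longrightarrow>
             norm (grad \<theta> x - grad \<theta>' x') \<le> K1 * norm (\<theta> - \<theta>') + K2 * norm (x - x') * (norm \<theta> + norm \<theta>' + 1)"
    and "\<forall>x\<in>X. norm x \<le> D" and "0 \<le> K2" and "x \<in> X" and "x' \<in> X"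
  shows "norm (grad \<theta> x - grad \<theta> x') \<le> 2 * D * K2 * (2 * norm \<theta> + 1)"
proof -
  have "norm x \<le> D" and "norm x' \<le> D"
    using assms(2,4,5) by auto
  then have "norm (x - x') \<le> 2 * D"
    using norm_triangle_ineq4[of x x'] by linarith
  then have "K2 * norm (x - x') * (2 * norm \<theta> + 1) \<le> K2 * (2 * D) * (2 * norm \<theta> + 1)"
    using assms(3) by (intro mult_right_mono mult_left_mono) auto
  then show ?thesis
    using assms(1)[of x x' \<theta> \<theta>] assms(4,5) by (simp add: algebra_simps)
qed

lemma Phat_Vhat_le:
  fixes grad :: "'a::real_inner \<Rightarrow> 'b \<Rightarrow> 'a"
  assumes b: "b \<in> {1..n}"
    and m: "m = (1 / real n) *\<^sub>R (\<Sum>i=1..n. grad \<theta> (xh i))"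
    and dispersion: "\<And>i. i \<in> {1..n} \<Longrightarrow> norm (grad \<theta> (xh i) - m) \<le> M"
  shows "Phat grad xh n b \<eta> (Vhat \<theta>s) \<theta> \<le> 1 + (norm (\<theta> - \<theta>s - \<eta> *\<^sub>R m))\<^sup>2 + \<eta>\<^sup>2 * M\<^sup>2"
proof -
  define u where "u = \<theta> - \<theta>s - \<eta> *\<^sub>R m"
  define e where "e \<Omega> = (1 / real b) *\<^sub>R (\<Sum>i\<in>\<Omega>. grad \<theta> (xh i)) - m" for \<Omega>
  have step: "sgd_step grad xh b \<eta> \<Omega> \<theta> - \<theta>s = u - \<eta> *\<^sub>R e \<Omega>" for \<Omega>
    by (simp add: sgd_step_def u_def e_def algebra_simps)
  have fin: "finite (set_pmf (minibatch n b))"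
    using b by (simp add: finite_set_pmf_minibatch)
  have int: "integrable (minibatch n b) g" for g :: "nat set \<Rightarrow> real"
    using fin by (rule integrable_measure_pmf_finite)
  have unbiased: "measure_pmf.expectation (minibatch n b) (\<lambda>\<Omega>. u \<bullet> e \<Omega>) = 0"
  proof -
    have "measure_pmf.expectation (minibatch n b) (\<lambda>\<Omega>. u \<bullet> e \<Omega>)
            = (1 / real b) * measure_pmf.expectation (minibatch n b) (\<lambda>\<Omega>. \<Sum>i\<in>\<Omega>. u \<bullet> grad \<theta> (xh i)) - u \<bullet> m"
      by (simp add: e_def inner_diff_right inner_sum_right int)
    also have "\<dots> = 0"
      using b by (simp add: expectation_minibatch_sum m inner_sum_right)
    finally show ?thesis .
  qed
  have noise_bound: "norm (e \<Omega>) \<le> M" if "\<Omega> \<in> set_pmf (minibatch n b)" for \<Omega>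
  proof -
    have \<Omega>: "\<Omega> \<subseteq> {1..n}" "card \<Omega> = b"
      using that b by (auto simp: set_pmf_minibatch)
    then have "finite \<Omega>" "\<Omega> \<noteq> {}"
      using b by (auto intro: finite_subset)
    then have "norm (m - (1 / real (card \<Omega>)) *\<^sub>R (\<Sum>i\<in>\<Omega>. grad \<theta> (xh i))) \<le> M"
      using \<Omega> dispersion by (intro norm_diff_mean_le) (auto simp: norm_minus_commute)
    then show ?thesis
      using \<Omega> by (simp add: e_def norm_minus_commute)
  qed
  have "Phat grad xh n b \<eta> (Vhat \<theta>s) \<theta> = 1 + measure_pmf.expectation (minibatch n b) (\<lambda>\<Omega>. (norm (u - \<eta> *\<^sub>R e \<Omega>))\<^sup>2)"
    by (simp add: Phat_def Vhat_def step int)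
  also have "\<dots> \<le> 1 + (norm u)\<^sup>2 + \<eta>\<^sup>2 * M\<^sup>2"
    using expectation_norm_diff_sq_le[OF fin unbiased noise_bound] by simp
  finally show ?thesis
    by (simp add: u_def)
qed

lemma drift_bound_arith:
  fixes \<eta> \<mu> K1 K2 D r s t :: real
  assumes "0 \<le> t" and "t \<le> r + s" and "0 < \<eta>" and "\<eta> * (K1\<^sup>2 + 64 * D\<^sup>2 * K2\<^sup>2) \<le> \<mu>"
  shows "1 + (1 - 2 * \<eta> * \<mu> + \<eta>\<^sup>2 * K1\<^sup>2) * r\<^sup>2 + \<eta>\<^sup>2 * (2 * D * K2 * (2 * t + 1))\<^sup>2
           \<le> (1 - \<eta> * \<mu>) * (1 + r\<^sup>2) + 2 * \<eta> * \<mu> - \<eta>\<^sup>2 * K1\<^sup>2 - 56 * \<eta>\<^sup>2 * D\<^sup>2 * K2\<^sup>2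
             + 64 * \<eta>\<^sup>2 * D\<^sup>2 * K2\<^sup>2 * s\<^sup>2" (is "?L \<le> ?R")
proof -
  define w where "w = D\<^sup>2 * K2\<^sup>2"
  have "(2 * t + 1)\<^sup>2 \<le> 8 * t\<^sup>2 + 2"
    using zero_le_power2[of "2 * t - 1"] by (simp add: power2_eq_square algebra_simps)
  also have "t\<^sup>2 \<le> (r + s)\<^sup>2"
    using assms(1,2) by (simp add: power_mono)
  also have "(r + s)\<^sup>2 \<le> 2 * r\<^sup>2 + 2 * s\<^sup>2"
    using zero_le_power2[of "r - s"] by (simp add: power2_eq_square algebra_simps)
  finally have "\<eta>\<^sup>2 * (4 * w) * (2 * t + 1)\<^sup>2 \<le> \<eta>\<^sup>2 * (4 * w) * (16 * r\<^sup>2 + 16 * s\<^sup>2 + 2)"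
    by (intro mult_left_mono) (auto simp: w_def)
  moreover have "0 \<le> \<eta> * \<mu> - \<eta>\<^sup>2 * (K1\<^sup>2 + 64 * w)"
    using mult_left_mono[OF assms(4), of \<eta>] assms(3) by (simp add: w_def power2_eq_square algebra_simps)
  then have "0 \<le> (\<eta> * \<mu> - \<eta>\<^sup>2 * (K1\<^sup>2 + 64 * w)) * (1 + r\<^sup>2)"
    by simp
  moreover have "?R - ?L = (\<eta> * \<mu> - \<eta>\<^sup>2 * (K1\<^sup>2 + 64 * w)) * (1 + r\<^sup>2)
      + (\<eta>\<^sup>2 * (4 * w) * (16 * r\<^sup>2 + 16 * s\<^sup>2 + 2) - \<eta>\<^sup>2 * (4 * w) * (2 * t + 1)\<^sup>2)"
    by (simp add: w_def power2_eq_square algebra_simps)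
  ultimately show ?thesis
    by linarith
qed

theorem lemmaC2:
  fixes f :: "'a::euclidean_space \<Rightarrow> 'b::euclidean_space \<Rightarrow> real"
    and grad :: "'a \<Rightarrow> 'b \<Rightarrow> 'a"
    and X :: "'b set"
    and D K1 K2 \<mu> \<eta> :: real
    and xh :: "nat \<Rightarrow> 'b"
    and n b :: nat
    and \<theta>s :: 'a
  assumes grad: "\<And>\<theta> x. x \<in> X \<Longrightarrow> ((\<lambda>t. f t x) has_derivative (\<lambda>h. grad \<theta> x \<bullet> h)) (at \<theta>)"
    and bounded: "\<forall>x\<in>X. norm x \<le> D"
    and K1: "K1 > 0" and K2: "K2 > 0"
    and A1: "\<And>\<theta> \<theta>' x x'. x \<in> X \<Longrightarrow> x' \<in> X \<Longrightarrow>
               norm (grad \<theta> x - grad \<theta>' x') \<le>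
                 K1 * norm (\<theta> - \<theta>') + K2 * norm (x - x') * (norm \<theta> + norm \<theta>' + 1)"
    and mu: "\<mu> > 0"
    and A2: "\<And>\<theta>1 \<theta>2 x. x \<in> X \<Longrightarrow>
               (grad \<theta>1 x - grad \<theta>2 x) \<bullet> (\<theta>1 - \<theta>2) \<ge> \<mu> * (norm (\<theta>1 - \<theta>2))\<^sup>2"
    and xh: "\<And>i. i \<in> {1..n} \<Longrightarrow> xh i \<in> X"
    and b: "b \<in> {1..n}"
    and minimizer: "\<And>\<theta>. Fhat f xh n \<theta>s \<le> Fhat f xh n \<theta>"
    and eta_pos: "\<eta> > 0"
    and eta: "\<eta> < min (1 / \<mu>) (\<mu> / (K1\<^sup>2 + 64 * D\<^sup>2 * K2\<^sup>2))"
  shows "\<forall>\<theta>. Phat grad xh n b \<eta> (Vhat \<theta>s) \<theta> \<le>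
           (1 - \<eta> * \<mu>) * Vhat \<theta>s \<theta> + 2 * \<eta> * \<mu> - \<eta>\<^sup>2 * K1\<^sup>2 - 56 * \<eta>\<^sup>2 * D\<^sup>2 * K2\<^sup>2
           + 64 * \<eta>\<^sup>2 * D\<^sup>2 * K2\<^sup>2 * (norm \<theta>s)\<^sup>2"
proof
  fix \<theta> :: 'a
  have n: "1 \<le> n"
    using b by simp
  define m where "m = (1 / real n) *\<^sub>R (\<Sum>i=1..n. grad \<theta> (xh i))"
  have dispersion: "norm (grad \<theta> (xh i) - m) \<le> 2 * D * K2 * (2 * norm \<theta> + 1)" if "i \<in> {1..n}" for i
    using norm_diff_mean_le[of "{1..n}" "grad \<theta> (xh i)" "\<lambda>j. grad \<theta> (xh j)"] n that
      norm_grad_diff_bounded_data_le[OF A1 bounded] K2 xh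
    by (simp add: m_def)
  have lipschitz: "norm (grad \<theta> (xh i) - grad \<theta>s (xh i)) \<le> K1 * norm (\<theta> - \<theta>s)" if "i \<in> {1..n}" for i
    using A1[of "xh i" "xh i" \<theta> \<theta>s] xh that by simp
  have contraction: "(norm (\<theta> - \<theta>s - \<eta> *\<^sub>R m))\<^sup>2 \<le> (1 - 2 * \<eta> * \<mu> + \<eta>\<^sup>2 * K1\<^sup>2) * (norm (\<theta> - \<theta>s))\<^sup>2"
    using power2_norm_averaged_gradient_step_le[of "{1..n}" "\<lambda>i t. grad t (xh i)" \<theta>s \<mu> \<theta> K1 \<eta>]
      Fhat_minimizer_gradient_sum_eq_0[OF grad xh minimizer n] n eta_pos lipschitz A2 xh
    by (simp add: m_def)
  have step_size: "\<eta> * (K1\<^sup>2 + 64 * D\<^sup>2 * K2\<^sup>2) \<le> \<mu>"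
    using eta K1 by (simp add: field_simps add_pos_nonneg)
  have triangle: "norm \<theta> \<le> norm (\<theta> - \<theta>s) + norm \<theta>s"
    by (metis norm_triangle_sub add.commute)
  have "Phat grad xh n b \<eta> (Vhat \<theta>s) \<theta>
          \<le> 1 + (norm (\<theta> - \<theta>s - \<eta> *\<^sub>R m))\<^sup>2 + \<eta>\<^sup>2 * (2 * D * K2 * (2 * norm \<theta> + 1))\<^sup>2"
    using b m_def dispersion by (rule Phat_Vhat_le)
  then show "Phat grad xh n b \<eta> (Vhat \<theta>s) \<theta> \<le>
           (1 - \<eta> * \<mu>) * Vhat \<theta>s \<theta> + 2 * \<eta> * \<mu> - \<eta>\<^sup>2 * K1\<^sup>2 - 56 * \<eta>\<^sup>2 * D\<^sup>2 * K2\<^sup>2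
           + 64 * \<eta>\<^sup>2 * D\<^sup>2 * K2\<^sup>2 * (norm \<theta>s)\<^sup>2"
    using contraction drift_bound_arith[OF norm_ge_zero triangle eta_pos step_size]
    unfolding Vhat_def by linarith
qed

end
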